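(* Let $n\ge 0$ and $r\ge 1$ be integers and let $x$ be a complex number with $xF_r(x)\neq 0$. Then \[ 2\sum_{j=0}^{n}F_{r-1}(x)^jF_{r+1}(x)^{n-j}=\sum_{j=0}^{n}\left(\frac{L_r(x)}{2}\right)^j\left(F_{r+1}(x)^{n-j}+F_{r-1}(x)^{n-j}\right)=2\,\frac{F_{r+1}(x)^{n+1}-F_{r-1}(x)^{n+1}}{xF_r(x)}. \]
   Context: The Fibonacci polynomials $F_n(x)$ and Lucas polynomials $L_n(x)$ are defined by $F_0(x)=0$, $F_1(x)=1$, $L_0(x)=2$, $L_1(x)=x$ and $G_{n+1}(x)=xG_n(x)+G_{n-1}(x)$. *)

theory Defs
  imports Complex_Main
begin

fun fibp :: "complex \<Rightarrow> nat \<Rightarrow> complex" where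
  "fibp x 0 = 0"
| "fibp x (Suc 0) = 1"
| "fibp x (Suc (Suc n)) = x * fibp x (Suc n) + fibp x n"

fun lucp :: "complex \<Rightarrow> nat \<Rightarrow> complex" where
  "lucp x 0 = 2"
| "lucp x (Suc 0) = x"
| "lucp x (Suc (Suc n)) = x * lucp x (Suc n) + lucp x n"

end

theory Submission
  imports Defs
begin

text \<open>Put a = F(r+1) and b = F(r-1). Then a + b = L(r) and a - b = x F(r), and the
  left-hand sum is the complete homogeneous sum h(n) = \<Sum>j. b^j a^(n-j), whose closed form
  (a^(n+1) - b^(n+1)) / (a - b) gives the second equation. For the first, peeling off the top
  term of h(n+1) at either end and adding gives 2 h(n+1) = (a + b) h(n) + a^(n+1) + b^(n+1),
  which is exactly the recursion satisfied by \<Sum>j. ((a + b)/2)^j (a^(n-j) + b^(n-j)).\<close>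

lemma sum_powers_Suc_left:
  fixes a b :: "'a::comm_semiring_1"
  shows "(\<Sum>j=0..Suc n. b ^ j * a ^ (Suc n - j)) = a * (\<Sum>j=0..n. b ^ j * a ^ (n - j)) + b ^ Suc n"
proof -
  have "(\<Sum>j=0..n. b ^ j * a ^ (Suc n - j)) = (\<Sum>j=0..n. a * (b ^ j * a ^ (n - j)))"
    by (rule sum.cong) (auto simp: Suc_diff_le ac_simps)
  then show ?thesis
    by (simp add: sum.atLeast0_atMost_Suc sum_distrib_left)
qed

lemma sum_powers_Suc_right:
  fixes a b :: "'a::comm_semiring_1"
  shows "(\<Sum>j=0..Suc n. b ^ j * a ^ (Suc n - j)) = b * (\<Sum>j=0..n. b ^ j * a ^ (n - j)) + a ^ Suc n"
  by (simp only: sum.atLeast0_atMost_Suc_shift diff_Suc_Suc power_Suc sum_distrib_left)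
    (simp add: ac_simps)

lemma sum_powers_add_Suc:
  fixes a b c :: "'a::comm_semiring_1"
  shows "(\<Sum>j=0..Suc n. c ^ j * (a ^ (Suc n - j) + b ^ (Suc n - j)))
       = c * (\<Sum>j=0..n. c ^ j * (a ^ (n - j) + b ^ (n - j))) + (a ^ Suc n + b ^ Suc n)"
  by (simp only: sum.atLeast0_atMost_Suc_shift diff_Suc_Suc power_Suc sum_distrib_left)
    (simp add: ac_simps)

lemma two_sum_powers_eq_sum_mean_powers:
  fixes a b c :: "'a::comm_semiring_1"
  assumes mean: "2 * c = a + b"
  shows "2 * (\<Sum>j=0..n. b ^ j * a ^ (n - j)) = (\<Sum>j=0..n. c ^ j * (a ^ (n - j) + b ^ (n - j)))"
proof (induction n)
  case 0
  then show ?case by simp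
next
  case (Suc n)
  let ?h = "\<lambda>n. \<Sum>j=0..n. b ^ j * a ^ (n - j)"
  have "2 * ?h (Suc n) = (a * ?h n + b ^ Suc n) + (b * ?h n + a ^ Suc n)"
    unfolding mult_2 by (rule arg_cong2 [where f = "(+)"] sum_powers_Suc_left sum_powers_Suc_right)+
  also have "\<dots> = (a + b) * ?h n + (a ^ Suc n + b ^ Suc n)"
    by (simp add: algebra_simps)
  also have "\<dots> = c * (2 * ?h n) + (a ^ Suc n + b ^ Suc n)"
    by (simp add: mean [symmetric] ac_simps)
  also have "\<dots> = c * (\<Sum>j=0..n. c ^ j * (a ^ (n - j) + b ^ (n - j))) + (a ^ Suc n + b ^ Suc n)"
    by (simp only: Suc.IH)
  also have "\<dots> = (\<Sum>j=0..Suc n. c ^ j * (a ^ (Suc n - j) + b ^ (Suc n - j)))"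
    by (rule sum_powers_add_Suc [symmetric])
  finally show ?case .
qed

lemma diff_times_sum_powers:
  fixes a b :: "'a::comm_ring_1"
  shows "(a - b) * (\<Sum>j=0..n. b ^ j * a ^ (n - j)) = a ^ Suc n - b ^ Suc n"
proof -
  have "b ^ Suc n - a ^ Suc n = (b - a) * (\<Sum>j=0..n. b ^ j * a ^ (n - j))"
    by (simp only: diff_power_eq_sum atLeast0AtMost lessThan_Suc_atMost)
  then show ?thesis
    by (simp add: algebra_simps)
qed

lemma lucp_Suc_eq_fibp:
  "lucp x (Suc n) = fibp x (Suc (Suc n)) + fibp x n"
proof (induction x n rule: fibp.induct)
  case (3 x n)
  show ?case
    unfolding lucp.simps(3)[of x "Suc n"] 3 by (simp add: algebra_simps)
qed simp_all

theorem theorem11: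
  fixes n r :: nat and x :: complex
  assumes "r \<ge> 1" and "x * fibp x r \<noteq> 0"
  shows "2 * (\<Sum>j=0..n. fibp x (r - 1) ^ j * fibp x (r + 1) ^ (n - j))
           = (\<Sum>j=0..n. (lucp x r / 2) ^ j * (fibp x (r + 1) ^ (n - j) + fibp x (r - 1) ^ (n - j)))
       \<and> (\<Sum>j=0..n. (lucp x r / 2) ^ j * (fibp x (r + 1) ^ (n - j) + fibp x (r - 1) ^ (n - j)))
           = 2 * (fibp x (r + 1) ^ (n + 1) - fibp x (r - 1) ^ (n + 1)) / (x * fibp x r)"
proof -
  obtain s where r: "r = Suc s"
    using assms(1) by (cases r) auto
  define a where "a = fibp x (r + 1)"
  define b where "b = fibp x (r - 1)"
  have mean: "2 * (lucp x r / 2) = a + b"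
    by (simp add: a_def b_def r lucp_Suc_eq_fibp)
  have diff: "a - b = x * fibp x r"
    by (simp add: a_def b_def r)
  have "(\<Sum>j=0..n. b ^ j * a ^ (n - j)) = (a ^ (n + 1) - b ^ (n + 1)) / (x * fibp x r)"
    using diff_times_sum_powers[of a b n] assms(2)
    by (simp add: diff eq_divide_eq mult.commute)
  then show ?thesis
    using two_sum_powers_eq_sum_mean_powers[OF mean, of n]
    by (simp add: a_def b_def)
qed

end
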